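(* Let $q\ge 1$ and assume Hypothesis (H$_q$). Then for all $x\in[a,b]$, $\lambda\in[0,1]$ and $\theta>0$, $$\big|S_f(mx,\lambda,\theta,ma,mb)\big|\le\frac{m^\theta A_1(\theta,\lambda)^{1-\frac1q}}{b-a}\Big\{(x-a)^{\theta+1}\Big(|f'(mx)|^qA_2(\alpha,\theta,\lambda)+m|f'(a)|^qA_3(\alpha,\theta,\lambda)\Big)^{\frac1q}+(b-x)^{\theta+1}\Big(|f'(mx)|^qA_2(\alpha,\theta,\lambda)+m|f'(b)|^qA_3(\alpha,\theta,\lambda)\Big)^{\frac1q}\Big\}.$$
   Context: Let $\Gamma$ denote Euler's Gamma function. Given $m\in(0,1]$, $a<b$, $x\in[a,b]$, $\lambda\in[0,1]$, $\theta>0$ and a function $f$ integrable on $[ma,mb]$, the Riemann–Liouville fractional integrals appearing below are $J^\theta_{(mx)^-}f(ma)=\frac{1}{\Gamma(\theta)}\int_{ma}^{mx}(s-ma)^{\theta-1}f(s)\,ds$ and $J^\theta_{(mx)^+}f(mb)=\frac{1}{\Gamma(\theta)}\int_{mx}^{mb}(mb-s)^{\theta-1}f(s)\,ds$ (each equal to $0$ if its interval of integration is degenerate), and $$S_f(mx,\lambda,\theta,ma,mb)=(1-\lambda)m^{\theta-1}\frac{(x-a)^\theta+(b-x)^\theta}{b-a}f(mx)+\lambda m^{\theta-1}\frac{(x-a)^\theta f(ma)+(b-x)^\theta f(mb)}{b-a}-\frac{\Gamma(\theta+1)}{m(b-a)}\Big[J^\theta_{(mx)^-}f(ma)+J^\theta_{(mx)^+}f(mb)\Big].$$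 $(\alpha,m)$-convexity: for $(\alpha,m)\in[0,1]\times(0,1]$ and an interval $K\subseteq[0,\infty)$, a function $g:K\to\mathbb{R}$ is $(\alpha,m)$-convex on $K$ if $g(tX+m(1-t)Y)\le t^\alpha g(X)+m(1-t^\alpha)g(Y)$ for all $X,Y\in K$ and $t\in[0,1]$ with $tX+m(1-t)Y\in K$ (convention $0^0=1$). Hypothesis (H$_q$): $I\subseteq[0,\infty)$ is an interval, $f:I\to\mathbb{R}$ is differentiable on the interior $I^\circ$, $m\in(0,1]$, $\alpha\in[0,1]$, $a<b$ with $ma,b\in I^\circ$, $f'$ is Lebesgue integrable on $[ma,mb]$, and $|f'|^q$ is $(\alpha,m)$-convex on $[ma,b]$. Constants: $A_1(\theta,\lambda)=\frac{2\theta\lambda^{1+\frac1\theta}+1}{\theta+1}-\lambda$, $A_2(\alpha,\theta,\lambda)=\frac{2\theta\lambda^{1+\frac{1+\alpha}{\theta}}}{(\alpha+1)(\alpha+\theta+1)}+\frac{1}{\alpha+\theta+1}-\frac{\lambda}{\alpha+1}$, $A_3(\alpha,\theta,\lambda)=A_1(\theta,\lambda)-A_2(\alpha,\theta,\lambda)$. *)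

theory Defs
  imports "HOL-Analysis.Analysis"
begin

text \<open>Power with the convention 0^0 = 1 (used for t^alpha with t in [0,1]).\<close>
definition pow0 :: "real \<Rightarrow> real \<Rightarrow> real" where
  "pow0 t e = (if e = 0 then 1 else t powr e)"

definition alpha_m_convex_on :: "real \<Rightarrow> real \<Rightarrow> real set \<Rightarrow> (real \<Rightarrow> real) \<Rightarrow> bool" where
  "alpha_m_convex_on \<alpha> m K g \<longleftrightarrow>
     (\<forall>X\<in>K. \<forall>Y\<in>K. \<forall>t\<in>{0..1}. t * X + m * (1 - t) * Y \<in> K \<longrightarrow>
        g (t * X + m * (1 - t) * Y) \<le> pow0 t \<alpha> * g X + m * (1 - pow0 t \<alpha>) * g Y)"

text \<open>Riemann--Liouville fractional integrals (Lebesgue integrals over closed intervals;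
  0 if the interval is degenerate).\<close>
definition RL_left :: "real \<Rightarrow> (real \<Rightarrow> real) \<Rightarrow> real \<Rightarrow> real \<Rightarrow> real" where
  "RL_left \<theta> f u v = (1 / Gamma \<theta>) * (LINT s:{v..u}|lborel. (s - v) powr (\<theta> - 1) * f s)"


definition RL_right :: "real \<Rightarrow> (real \<Rightarrow> real) \<Rightarrow> real \<Rightarrow> real \<Rightarrow> real" where
  "RL_right \<theta> f u w = (1 / Gamma \<theta>) * (LINT s:{u..w}|lborel. (w - s) powr (\<theta> - 1) * f s)"

definition S_f :: "(real \<Rightarrow> real) \<Rightarrow> real \<Rightarrow> real \<Rightarrow> real \<Rightarrow> real \<Rightarrow> real \<Rightarrow> real \<Rightarrow> real" where
  "S_f f m x l \<theta> a b =
     (1 - l) * m powr (\<theta> - 1) * (((x - a) powr \<theta> + (b - x) powr \<theta>) / (b - a)) * f (m * x)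
   + l * m powr (\<theta> - 1) * (((x - a) powr \<theta> * f (m * a) + (b - x) powr \<theta> * f (m * b)) / (b - a))
   - Gamma (\<theta> + 1) / (m * (b - a)) * (RL_left \<theta> f (m * x) (m * a) + RL_right \<theta> f (m * x) (m * b))"

definition A1 :: "real \<Rightarrow> real \<Rightarrow> real" where
  "A1 \<theta> l = (2 * \<theta> * l powr (1 + 1 / \<theta>) + 1) / (\<theta> + 1) - l"

definition A2 :: "real \<Rightarrow> real \<Rightarrow> real \<Rightarrow> real" where
  "A2 \<alpha> \<theta> l = 2 * \<theta> * l powr (1 + (1 + \<alpha>) / \<theta>) / ((\<alpha> + 1) * (\<alpha> + \<theta> + 1))
     + 1 / (\<alpha> + \<theta> + 1) - l / (\<alpha> + 1)"

definition A3 :: "real \<Rightarrow> real \<Rightarrow> real \<Rightarrow> real" where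
  "A3 \<alpha> \<theta> l = A1 \<theta> l - A2 \<alpha> \<theta> l"

end

theory Submission
  imports Defs
begin

text \<open>\<open>m (b - a) S_f\<close> is the sum of the one-sided defects \<open>frac_defect \<theta> l f u (m x)\<close> for
  \<open>u = m a\<close> and \<open>u = m b\<close>. Substituting \<open>s = u + (v - u) t\<close> and integrating by parts gives
  \<open>frac_defect \<theta> l f u v = (v - u) |v - u| powr \<theta> \<integral>\<^sub>0\<^sup>1 (t powr \<theta> - l) f' (u + (v - u) t) dt\<close>.
  The power-mean inequality for the weight \<open>|t powr \<theta> - l|\<close>, whose mass is \<open>A1\<close>, bounds
  this integral by \<open>A1 powr (1 - 1/q)\<close> times the \<open>q\<close>-th root of the weighted integral of
  \<open>|f'| powr q\<close>. Along the segment, \<open>(\<alpha>, m)\<close>-convexity bounds \<open>|f'| powr q\<close> by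
  \<open>t powr \<alpha> |f' (m x)| powr q + m (1 - t powr \<alpha>) |f' (u / m)| powr q\<close>, and integrating this
  against the weight produces \<open>A2\<close> and \<open>A3\<close>.\<close>

lemma pow0_nonneg: "0 \<le> t \<Longrightarrow> 0 \<le> pow0 t e"
  by (simp add: pow0_def)

lemma pow0_le_one: "0 \<le> t \<Longrightarrow> t \<le> 1 \<Longrightarrow> 0 \<le> e \<Longrightarrow> pow0 t e \<le> 1"
  unfolding pow0_def using powr_mono2[of e t 1] by auto

lemma pow0_pos: "0 < t \<Longrightarrow> pow0 t e = t powr e"
  by (simp add: pow0_def)

lemma continuous_on_pow0:
  assumes "0 \<le> e"
  shows "continuous_on {0..} (\<lambda>t. pow0 t e)"
proof (cases "e = 0")
  case False
  with assms have "0 < e" by simp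
  then show ?thesis
    unfolding pow0_def using False by (simp, intro continuous_on_powr') (auto intro: continuous_intros)
qed (simp add: pow0_def)

lemma A2_altdef:
  fixes \<beta> \<theta> l :: real
  assumes "\<beta> \<ge> 0" "\<theta> > 0"
  shows "A2 \<beta> \<theta> l = 2 * (l powr (1 + (1 + \<beta>) / \<theta>) / (\<beta> + 1) - l powr (1 + (1 + \<beta>) / \<theta>) / (\<beta> + \<theta> + 1))
      - (l / (\<beta> + 1) - 1 / (\<beta> + \<theta> + 1))"
proof -
  have "2 * (L / B - L / B') - (l / B - 1 / B') = 2 * (B' - B) * L / (B * B') + 1 / B' - l / B"
    if "B \<noteq> 0" "B' \<noteq> 0" for L B B' :: real
    using that by (simp add: field_simps)
  moreover have "\<beta> + 1 \<noteq> 0" "\<beta> + \<theta> + 1 \<noteq> 0"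
    using assms by linarith+
  ultimately show ?thesis
    unfolding A2_def by (simp add: add_ac)
qed

lemma has_real_derivative_powr_primitive:
  fixes \<beta> \<theta> l t :: real
  assumes \<beta>: "\<beta> \<ge> 0" and \<theta>: "\<theta> > 0" and t: "t > 0"
  shows "((\<lambda>t. l * t powr (\<beta> + 1) / (\<beta> + 1) - t powr (\<beta> + \<theta> + 1) / (\<beta> + \<theta> + 1))
    has_real_derivative (l - t powr \<theta>) * pow0 t \<beta>) (at t)"
proof -
  have "\<beta> + 1 \<noteq> 0" "\<beta> + \<theta> + 1 \<noteq> 0"
    using \<beta> \<theta> by linarith+
  then have "l * ((\<beta> + 1) * t powr \<beta>) / (\<beta> + 1)
      - (\<beta> + \<theta> + 1) * t powr (\<beta> + \<theta>) / (\<beta> + \<theta> + 1) = (l - t powr \<theta>) * pow0 t \<beta>"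
    using t by (simp add: pow0_pos powr_add) (simp add: algebra_simps)
  moreover have "((\<lambda>t. l * t powr (\<beta> + 1) / (\<beta> + 1) - t powr (\<beta> + \<theta> + 1) / (\<beta> + \<theta> + 1))
      has_real_derivative l * ((\<beta> + 1) * t powr \<beta>) / (\<beta> + 1)
        - (\<beta> + \<theta> + 1) * t powr (\<beta> + \<theta>) / (\<beta> + \<theta> + 1)) (at t)"
    using t by (auto intro!: derivative_eq_intros)
  ultimately show ?thesis
    by simp
qed

lemma has_integral_abs_powr_minus_pow0:
  fixes \<theta> l \<beta> :: real
  assumes \<theta>: "\<theta> > 0" and l: "0 \<le> l" "l \<le> 1" and \<beta>: "\<beta> \<ge> 0"
  shows "((\<lambda>t. \<bar>t powr \<theta> - l\<bar> * pow0 t \<beta>) has_integral A2 \<beta> \<theta> l) {0..1}"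
proof -
  define c where "c = l powr (1 / \<theta>)"
  define L where "L = l powr (1 + (1 + \<beta>) / \<theta>)"
  have c: "0 \<le> c" "c \<le> 1"
    unfolding c_def using powr_mono2[of "1 / \<theta>" l 1] l \<theta> by auto
  have c_powr: "c powr e = l powr (e / \<theta>)" for e
    using l by (cases "l = 0") (auto simp: c_def powr_powr)
  have c_powr_\<theta>: "c powr \<theta> = l"
    using c_powr[of \<theta>] \<theta> l by simp
  have "l * c powr (\<beta> + 1) = l powr 1 * l powr ((\<beta> + 1) / \<theta>)"
    using l by (simp add: c_powr)
  also have "\<dots> = L"
    unfolding L_def powr_add[symmetric] by (simp add: add_ac)
  finally have L_eq: "l * c powr (\<beta> + 1) = L" .
  have L_eq': "c powr (\<beta> + \<theta> + 1) = L"
    using \<theta> by (simp add: c_powr L_def add_divide_distrib add_ac)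
  define G where "G t = l * t powr (\<beta> + 1) / (\<beta> + 1) - t powr (\<beta> + \<theta> + 1) / (\<beta> + \<theta> + 1)" for t
  have G_cont: "continuous_on {0..} G"
    unfolding G_def using \<beta> \<theta> by (auto intro!: continuous_intros continuous_on_powr')
  have G_deriv: "(G has_real_derivative (l - t powr \<theta>) * pow0 t \<beta>) (at t)" if "t > 0" for t
    unfolding G_def using \<beta> \<theta> that by (rule has_real_derivative_powr_primitive)
  have left: "((\<lambda>t. \<bar>t powr \<theta> - l\<bar> * pow0 t \<beta>) has_integral G c - G 0) {0..c}"
  proof (rule fundamental_theorem_of_calculus_interior)
    show "continuous_on {0..c} G"
      using G_cont by (rule continuous_on_subset) auto
    fix t assume t: "t \<in> {0<..<c}"
    then have "t powr \<theta> \<le> l"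
      using powr_mono2[of \<theta> t c] \<theta> c_powr_\<theta> by auto
    then show "(G has_vector_derivative \<bar>t powr \<theta> - l\<bar> * pow0 t \<beta>) (at t)"
      using G_deriv[of t] t by (simp add: has_real_derivative_iff_has_vector_derivative)
  qed (rule c(1))
  have right: "((\<lambda>t. \<bar>t powr \<theta> - l\<bar> * pow0 t \<beta>) has_integral (- G 1) - (- G c)) {c..1}"
  proof (rule fundamental_theorem_of_calculus_interior)
    show "continuous_on {c..1} (\<lambda>t. - G t)"
      using G_cont c by (auto intro: continuous_on_minus continuous_on_subset)
    fix t assume t: "t \<in> {c<..<1}"
    then have "l \<le> t powr \<theta>"
      using powr_mono2[of \<theta> c t] \<theta> c c_powr_\<theta> by auto
    then show "((\<lambda>t. - G t) has_vector_derivative \<bar>t powr \<theta> - l\<bar> * pow0 t \<beta>) (at t)"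
      using DERIV_minus[OF G_deriv[of t]] t c
      by (simp add: has_real_derivative_iff_has_vector_derivative[symmetric] algebra_simps)
  qed (rule c(2))
  have "2 * G c - G 0 - G 1 = 2 * (L / (\<beta> + 1) - L / (\<beta> + \<theta> + 1)) - (l / (\<beta> + 1) - 1 / (\<beta> + \<theta> + 1))"
    unfolding G_def L_eq L_eq' using \<beta> \<theta> by simp
  also have "\<dots> = A2 \<beta> \<theta> l"
    unfolding L_def by (rule A2_altdef[OF \<beta> \<theta>, symmetric])
  finally show ?thesis
    using has_integral_combine[OF c left right] by (simp add: algebra_simps)
qed

lemma has_integral_abs_powr_minus_convex_comb:
  fixes \<theta> l \<alpha> P R :: real
  assumes \<theta>: "\<theta> > 0" and l: "0 \<le> l" "l \<le> 1" and \<alpha>: "0 \<le> \<alpha>"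
  shows "((\<lambda>t. \<bar>t powr \<theta> - l\<bar> * (pow0 t \<alpha> * P + (1 - pow0 t \<alpha>) * R))
           has_integral P * A2 \<alpha> \<theta> l + R * A3 \<alpha> \<theta> l) {0..1}"
proof -
  have "((\<lambda>t. \<bar>t powr \<theta> - l\<bar>) has_integral A1 \<theta> l) {0..1}"
    using has_integral_abs_powr_minus_pow0[OF \<theta> l, of 0]
    by (simp add: pow0_def A1_def A2_def add_divide_distrib)
  moreover note has_integral_abs_powr_minus_pow0[OF \<theta> l \<alpha>]
  ultimately have "((\<lambda>t. P * (\<bar>t powr \<theta> - l\<bar> * pow0 t \<alpha>)
      + R * (\<bar>t powr \<theta> - l\<bar> - \<bar>t powr \<theta> - l\<bar> * pow0 t \<alpha>))
      has_integral P * A2 \<alpha> \<theta> l + R * (A1 \<theta> l - A2 \<alpha> \<theta> l)) {0..1}"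
    by (intro has_integral_add has_integral_mult_right has_integral_diff)
  then show ?thesis
    by (simp add: A3_def algebra_simps)
qed

lemma powr_inverse_le_tangent:
  fixes q K y :: real
  assumes q: "q \<ge> 1" and K: "K > 0" and y: "y \<ge> 0"
  shows "y powr (1 / q) \<le> K powr (1 / q) * (y / (K * q) + (1 - 1 / q))"
proof (cases "y = 0")
  case False
  then have "(y / K) powr (1 / q) * 1 powr (1 - 1 / q) \<le> (1 / q) * (y / K) + (1 - 1 / q) * 1"
    using q K y by (intro Youngs_inequality_0) auto
  then have "K powr (1 / q) * (y / K) powr (1 / q) \<le> K powr (1 / q) * (y / (K * q) + (1 - 1 / q))"
    by (intro mult_left_mono) (auto simp: mult.commute)
  moreover have "K powr (1 / q) * (y / K) powr (1 / q) = y powr (1 / q)"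
    using K y by (simp add: powr_mult[symmetric])
  ultimately show ?thesis
    by simp
qed (use q K in simp)

lemma nonpos_if_le_powr_mult:
  fixes X C p :: real
  assumes p: "p > 0" and C: "C \<ge> 0" and le: "\<And>K. K > 0 \<Longrightarrow> X \<le> K powr p * C"
  shows "X \<le> 0"
proof (rule ccontr)
  assume "\<not> X \<le> 0"
  then have "X > 0" by simp
  define K where "K = (X / (2 * (C + 1))) powr (1 / p)"
  have "K > 0" and K: "K powr p = X / (2 * (C + 1))"
    unfolding K_def using \<open>X > 0\<close> C p by (auto simp: powr_powr)
  have "X \<le> X / 2 * (C / (C + 1))"
    using le[OF \<open>K > 0\<close>] C unfolding K by (simp add: field_simps)
  also have "\<dots> \<le> X / 2"
    using \<open>X > 0\<close> C by (intro mult_left_le) auto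
  finally show False
    using \<open>X > 0\<close> by simp
qed

lemma integral_weighted_powr_le_tangent:
  fixes w \<phi> :: "real \<Rightarrow> real" and q A \<Phi> K :: real and S :: "real set"
  assumes q: "q \<ge> 1" and K: "K > 0"
    and w_nonneg: "\<And>t. t \<in> S \<Longrightarrow> 0 \<le> w t" and \<phi>_nonneg: "\<And>t. t \<in> S \<Longrightarrow> 0 \<le> \<phi> t"
    and w: "(w has_integral A) S" and w\<phi>: "((\<lambda>t. w t * \<phi> t) has_integral \<Phi>) S"
    and integrable: "(\<lambda>t. w t * \<phi> t powr (1 / q)) integrable_on S"
  shows "integral S (\<lambda>t. w t * \<phi> t powr (1 / q)) \<le> K powr (1 / q) * (\<Phi> / (K * q) + (1 - 1 / q) * A)"
proof -
  have "((\<lambda>t. K powr (1 / q) * (w t * \<phi> t / (K * q) + (1 - 1 / q) * w t)) has_integral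
        K powr (1 / q) * (\<Phi> / (K * q) + (1 - 1 / q) * A)) S"
    by (intro has_integral_mult_right has_integral_add has_integral_divide w\<phi> w)
  moreover have "w t * \<phi> t powr (1 / q) \<le> K powr (1 / q) * (w t * \<phi> t / (K * q) + (1 - 1 / q) * w t)"
    if "t \<in> S" for t
    using mult_left_mono[OF powr_inverse_le_tangent[OF q K \<phi>_nonneg[OF that]] w_nonneg[OF that]]
    by (simp add: algebra_simps)
  ultimately show ?thesis
    using has_integral_le[OF integrable_integral[OF integrable]] by blast
qed

text \<open>Jensen's inequality for the concave map \<open>y \<mapsto> y powr (1/q)\<close> with respect to the
  weight \<open>w\<close>: optimise the tangent point, \<open>K = \<Phi> / A\<close>. The bound \<open>B\<close> forces \<open>\<Phi> = 0\<close>
  when \<open>A = 0\<close>.\<close>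
lemma integral_weighted_powr_le:
  fixes w \<phi> :: "real \<Rightarrow> real" and q A \<Phi> B :: real and S :: "real set"
  assumes q: "q \<ge> 1"
    and w_nonneg: "\<And>t. t \<in> S \<Longrightarrow> 0 \<le> w t"
    and \<phi>_bounds: "\<And>t. t \<in> S \<Longrightarrow> 0 \<le> \<phi> t \<and> \<phi> t \<le> B"
    and w: "(w has_integral A) S" and w\<phi>: "((\<lambda>t. w t * \<phi> t) has_integral \<Phi>) S"
    and integrable: "(\<lambda>t. w t * \<phi> t powr (1 / q)) integrable_on S"
  shows "integral S (\<lambda>t. w t * \<phi> t powr (1 / q)) \<le> A powr (1 - 1 / q) * \<Phi> powr (1 / q)"
proof -
  define X where "X = integral S (\<lambda>t. w t * \<phi> t powr (1 / q))"
  have tangent: "X \<le> K powr (1 / q) * (\<Phi> / (K * q) + (1 - 1 / q) * A)" if "K > 0" for K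
    unfolding X_def using \<phi>_bounds
    by (intro integral_weighted_powr_le_tangent[OF q that w_nonneg _ w w\<phi> integrable]) auto
  have A: "A \<ge> 0"
    using has_integral_nonneg[OF w] w_nonneg by auto
  have \<Phi>: "\<Phi> \<ge> 0"
    using has_integral_nonneg[OF w\<phi>] w_nonneg \<phi>_bounds by auto
  have "w t * \<phi> t \<le> B * w t" if "t \<in> S" for t
    using mult_left_mono[of "\<phi> t" B "w t"] w_nonneg[OF that] \<phi>_bounds[OF that] by (simp add: mult.commute)
  then have "\<Phi> \<le> B * A"
    using has_integral_le[OF w\<phi> has_integral_mult_right[OF w, of B]] by blast
  show ?thesis
  proof (cases "\<Phi> = 0")
    case True
    have "X \<le> 0"
      using q A tangent True by (intro nonpos_if_le_powr_mult[of "1 / q" "(1 - 1 / q) * A"]) auto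
    with True show ?thesis
      by (simp add: X_def)
  next
    case False
    then have "A > 0" "\<Phi> > 0"
      using A \<Phi> \<open>\<Phi> \<le> B * A\<close> by (auto simp: order.strict_iff_order)
    then have "X \<le> (\<Phi> / A) powr (1 / q) * (\<Phi> / ((\<Phi> / A) * q) + (1 - 1 / q) * A)"
      using tangent[of "\<Phi> / A"] by simp
    also have "\<Phi> / ((\<Phi> / A) * q) + (1 - 1 / q) * A = A"
      using \<open>A > 0\<close> \<open>\<Phi> > 0\<close> q by (simp add: field_simps)
    also have "(\<Phi> / A) powr (1 / q) * A = A powr (1 - 1 / q) * \<Phi> powr (1 / q)"
      using \<open>A > 0\<close> \<open>\<Phi> > 0\<close> by (simp add: powr_divide powr_diff)
    finally show ?thesis
      unfolding X_def .
  qed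
qed

lemma affine_mem_segment_iff:
  fixes u v t :: real
  assumes "u \<noteq> v"
  shows "u + (v - u) * t \<in> {min u v..max u v} \<longleftrightarrow> t \<in> {0..1}"
proof -
  have "{min u v..max u v} = (\<lambda>t. u + (v - u) * t) ` {0..1}"
    using closed_segment_real_eq[of u v] closed_segment_eq_real_ivl[of u v]
    by (cases "u \<le> v") (simp_all add: min_def max_def add.commute)
  moreover have "inj (\<lambda>t. u + (v - u) * t)"
    using assms by (auto simp: inj_on_def)
  ultimately show ?thesis
    by (metis inj_image_mem_iff)
qed

lemma atLeastAtMost_subset_interior:
  fixes I :: "real set"
  assumes "is_interval I" "u \<in> interior I" "v \<in> interior I"
  shows "{u..v} \<subseteq> interior I"
proof (cases "u \<le> v")
  case True
  have "closed_segment u v \<subseteq> interior I"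
    using assms by (intro closed_segment_subset convex_interior) (auto simp: is_interval_convex_1)
  with True show ?thesis
    by (simp add: closed_segment_eq_real_ivl1)
qed simp

lemma set_integral_abs_powr_segment:
  fixes k :: "real \<Rightarrow> real" and u v \<theta> :: real
  assumes "u \<noteq> v"
  shows "(LINT s:{min u v..max u v}|lborel. \<bar>s - u\<bar> powr (\<theta> - 1) * k s)
       = \<bar>v - u\<bar> powr \<theta> * (LINT t:{0..1}|lborel. t powr (\<theta> - 1) * k (u + (v - u) * t))"
proof -
  let ?c = "v - u"
  have c: "\<bar>?c\<bar> > 0"
    using assms by simp
  have "(LINT s:{min u v..max u v}|lborel. \<bar>s - u\<bar> powr (\<theta> - 1) * k s)
      = \<bar>?c\<bar> *\<^sub>R (\<integral>t. indicator {min u v..max u v} (u + ?c * t)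
          *\<^sub>R (\<bar>u + ?c * t - u\<bar> powr (\<theta> - 1) * k (u + ?c * t)) \<partial>lborel)"
    unfolding set_lebesgue_integral_def using assms by (intro lborel_integral_real_affine) simp
  also have "(\<lambda>t. indicator {min u v..max u v} (u + ?c * t) *\<^sub>R (\<bar>u + ?c * t - u\<bar> powr (\<theta> - 1) * k (u + ?c * t)))
      = (\<lambda>t. \<bar>?c\<bar> powr (\<theta> - 1) * (indicator {0..1} t *\<^sub>R (t powr (\<theta> - 1) * k (u + ?c * t))))"
    using affine_mem_segment_iff[OF assms]
    by (auto simp: fun_eq_iff indicator_def abs_mult powr_mult)
  also have "\<bar>?c\<bar> *\<^sub>R (\<integral>t. \<bar>?c\<bar> powr (\<theta> - 1) * (indicator {0..1} t *\<^sub>R (t powr (\<theta> - 1) * k (u + ?c * t))) \<partial>lborel)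
      = \<bar>?c\<bar> * \<bar>?c\<bar> powr (\<theta> - 1) * (LINT t:{0..1}|lborel. t powr (\<theta> - 1) * k (u + ?c * t))"
    unfolding set_lebesgue_integral_def by simp
  also have "\<bar>?c\<bar> * \<bar>?c\<bar> powr (\<theta> - 1) = \<bar>?c\<bar> powr \<theta>"
    using c by (simp add: powr_diff)
  finally show ?thesis .
qed

lemma set_integrable_powr_mult_continuous:
  fixes F :: "real \<Rightarrow> real" and \<theta> :: real
  assumes F: "continuous_on {0..1} F" and \<theta>: "\<theta> > 0"
  shows "set_integrable lborel {0..1} (\<lambda>t. t powr (\<theta> - 1) * F t)"
proof -
  have "(\<lambda>t. t powr (\<theta> - 1)) absolutely_integrable_on {0..1}"
    using integrable_on_powr_from_0[of "\<theta> - 1" 1] \<theta>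
    by (intro nonnegative_absolutely_integrable_1) auto
  moreover have "F \<in> borel_measurable (lebesgue_on {0..1})"
    by (rule continuous_imp_measurable_on_sets_lebesgue[OF F]) auto
  moreover have "bounded (F ` {0..1})"
    by (intro compact_imp_bounded compact_continuous_image[OF F]) auto
  ultimately have "(\<lambda>t. F t * t powr (\<theta> - 1)) absolutely_integrable_on {0..1}"
    by (intro absolutely_integrable_bounded_measurable_product_real) auto
  then have integrable: "integrable lebesgue (\<lambda>t. indicator {0..1} t *\<^sub>R (t powr (\<theta> - 1) * F t))"
    unfolding set_integrable_def by (simp add: mult.commute)
  have "(\<lambda>t. indicator {0..1} t *\<^sub>R (t powr (\<theta> - 1) * F t))
      = (\<lambda>t. indicator {0<..1} t *\<^sub>R (t powr (\<theta> - 1) * F t) + indicator {0} t *\<^sub>R (0 powr (\<theta> - 1) * F 0))"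
    by (auto simp: indicator_def fun_eq_iff)
  moreover have "(\<lambda>t. indicator {0<..1} t *\<^sub>R (t powr (\<theta> - 1) * F t)) \<in> borel_measurable borel"
    by (rule borel_measurable_continuous_on_indicator)
      (auto intro!: continuous_intros continuous_on_subset[OF F])
  ultimately have "(\<lambda>t. indicator {0..1} t *\<^sub>R (t powr (\<theta> - 1) * F t)) \<in> borel_measurable borel"
    by simp
  with integrable show ?thesis
    unfolding set_integrable_def by (simp add: integrable_completion)
qed

definition frac_defect :: "real \<Rightarrow> real \<Rightarrow> (real \<Rightarrow> real) \<Rightarrow> real \<Rightarrow> real \<Rightarrow> real" where
  "frac_defect \<theta> l f u v = \<bar>v - u\<bar> powr \<theta> * ((1 - l) * f v + l * f u)
     - \<theta> * (LINT s:{min u v..max u v}|lborel. \<bar>s - u\<bar> powr (\<theta> - 1) * f s)"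

lemma frac_defect_same: "frac_defect \<theta> l f u u = 0"
proof -
  have "(\<lambda>s. indicator {u..u} s *\<^sub>R (\<bar>s - u\<bar> powr (\<theta> - 1) * f s)) = (\<lambda>s. 0)"
    by (auto simp: indicator_def fun_eq_iff)
  then show ?thesis
    by (simp add: frac_defect_def set_lebesgue_integral_def)
qed

lemma has_integral_powr_minus_mult_deriv:
  fixes g g' :: "real \<Rightarrow> real" and \<theta> l :: real
  assumes \<theta>: "\<theta> > 0" and g: "continuous_on {0..1} g"
    and g': "\<And>t. t \<in> {0..1} \<Longrightarrow> (g has_real_derivative g' t) (at t)"
  shows "((\<lambda>t. \<theta> * t powr (\<theta> - 1) * g t + g' t * (t powr \<theta> - l)) has_integral (1 - l) * g 1 + l * g 0) {0..1}"
proof -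
  have "((\<lambda>t. \<theta> * t powr (\<theta> - 1) * g t + g' t * (t powr \<theta> - l))
      has_integral (1 powr \<theta> - l) * g 1 - (0 powr \<theta> - l) * g 0) {0..1}"
  proof (rule fundamental_theorem_of_calculus_interior[where f = "\<lambda>t. (t powr \<theta> - l) * g t"])
    show "continuous_on {0..1} (\<lambda>t. (t powr \<theta> - l) * g t)"
      using \<theta> by (intro continuous_intros g continuous_on_powr') auto
    fix t :: real
    assume t: "t \<in> {0<..<1}"
    have "((\<lambda>t. t powr \<theta> - l) has_real_derivative \<theta> * t powr (\<theta> - 1)) (at t)"
      using t by (auto intro!: derivative_eq_intros)
    from DERIV_mult[OF this g'[of t]] t
    show "((\<lambda>t. (t powr \<theta> - l) * g t) has_vector_derivative
        \<theta> * t powr (\<theta> - 1) * g t + g' t * (t powr \<theta> - l)) (at t)"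
      by (simp add: has_real_derivative_iff_has_vector_derivative)
  qed simp
  then show ?thesis
    using \<theta> by simp
qed

lemma has_integral_frac_defect:
  fixes f f' :: "real \<Rightarrow> real" and \<theta> l u v :: real
  assumes \<theta>: "\<theta> > 0" and uv: "u \<noteq> v"
    and deriv: "\<And>y. y \<in> {min u v..max u v} \<Longrightarrow> (f has_real_derivative f' y) (at y)"
  shows "((\<lambda>t. (t powr \<theta> - l) * f' (u + (v - u) * t)) has_integral
           frac_defect \<theta> l f u v / ((v - u) * \<bar>v - u\<bar> powr \<theta>)) {0..1}"
proof -
  define c where "c = v - u"
  have c: "c \<noteq> 0"
    using uv by (simp add: c_def)
  have f_deriv: "((\<lambda>t. f (u + c * t)) has_real_derivative f' (u + c * t) * c) (at t)"
    if "t \<in> {0..1}" for t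
  proof -
    have "u + c * t \<in> {min u v..max u v}"
      using affine_mem_segment_iff[OF uv] that by (simp add: c_def)
    moreover have "((\<lambda>t. u + c * t) has_real_derivative c) (at t)"
      by (auto intro!: derivative_eq_intros)
    ultimately show ?thesis
      using DERIV_chain2[OF deriv] by simp
  qed
  have f_cont: "continuous_on {0..1} (\<lambda>t. f (u + c * t))"
    using f_deriv by (intro continuous_at_imp_continuous_on ballI) (metis DERIV_isCont)
  define K where "K = (LINT t:{0..1}|lborel. t powr (\<theta> - 1) * f (u + c * t))"
  have K: "((\<lambda>t. t powr (\<theta> - 1) * f (u + c * t)) has_integral K) {0..1}"
    using set_borel_integral_eq_integral[OF set_integrable_powr_mult_continuous[OF f_cont \<theta>]]
    unfolding K_def by (metis integrable_integral)
  have parts: "((\<lambda>t. \<theta> * t powr (\<theta> - 1) * f (u + c * t) + f' (u + c * t) * c * (t powr \<theta> - l))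
      has_integral (1 - l) * f v + l * f u) {0..1}"
    using has_integral_powr_minus_mult_deriv[OF \<theta> f_cont, of "\<lambda>t. f' (u + c * t) * c" l] f_deriv
    by (simp add: c_def)
  have "((\<lambda>t. c * ((t powr \<theta> - l) * f' (u + c * t))) has_integral (1 - l) * f v + l * f u - \<theta> * K) {0..1}"
    using has_integral_diff[OF parts has_integral_mult_right[OF K, of \<theta>]]
    by (simp add: algebra_simps)
  from has_integral_mult_right[OF this, of "1 / c"]
  have "((\<lambda>t. (t powr \<theta> - l) * f' (u + c * t)) has_integral ((1 - l) * f v + l * f u - \<theta> * K) / c) {0..1}"
    using c by simp
  moreover have "frac_defect \<theta> l f u v = \<bar>c\<bar> powr \<theta> * ((1 - l) * f v + l * f u - \<theta> * K)"
    unfolding frac_defect_def set_integral_abs_powr_segment[OF uv] K_def c_def by (simp add: algebra_simps)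
  ultimately show ?thesis
    using c by (simp add: c_def)
qed

lemma pow0_convex_comb_bounds:
  fixes t \<alpha> P R :: real
  assumes "t \<in> {0..1}" and "0 \<le> \<alpha>" and "0 \<le> P" and "0 \<le> R"
  shows "0 \<le> pow0 t \<alpha> * P + (1 - pow0 t \<alpha>) * R \<and> pow0 t \<alpha> * P + (1 - pow0 t \<alpha>) * R \<le> P + R"
  using pow0_nonneg[of t \<alpha>] pow0_le_one[of t \<alpha>] assms
  by (auto intro!: add_nonneg_nonneg add_mono mult_left_le_one_le)

lemma continuous_on_abs_powr_minus_mult_root:
  fixes \<theta> l \<alpha> P R q :: real
  assumes \<theta>: "\<theta> > 0" and \<alpha>: "0 \<le> \<alpha>" and P: "0 \<le> P" and R: "0 \<le> R" and q: "q \<ge> 1"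
  shows "continuous_on {0..1} (\<lambda>t. \<bar>t powr \<theta> - l\<bar> * (pow0 t \<alpha> * P + (1 - pow0 t \<alpha>) * R) powr (1 / q))"
proof -
  have "continuous_on {0..1} (\<lambda>t. pow0 t \<alpha>)"
    using continuous_on_pow0[OF \<alpha>] by (rule continuous_on_subset) auto
  then have "continuous_on {0..1} (\<lambda>t. (pow0 t \<alpha> * P + (1 - pow0 t \<alpha>) * R) powr (1 / q))"
    using pow0_convex_comb_bounds[OF _ \<alpha> P R] q
    by (intro continuous_on_powr' continuous_intros) auto
  moreover have "continuous_on {0..1} (\<lambda>t. \<bar>t powr \<theta> - l\<bar>)"
    using \<theta> by (intro continuous_intros continuous_on_powr') auto
  ultimately show ?thesis
    by (rule continuous_on_mult[rotated])
qed

lemma abs_integral_powr_minus_mult_le: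
  fixes h :: "real \<Rightarrow> real" and \<theta> l q \<alpha> P R J :: real
  assumes \<theta>: "\<theta> > 0" and l: "0 \<le> l" "l \<le> 1" and q: "q \<ge> 1" and \<alpha>: "0 \<le> \<alpha>"
    and P: "P \<ge> 0" and R: "R \<ge> 0"
    and J: "((\<lambda>t. (t powr \<theta> - l) * h t) has_integral J) {0..1}"
    and bound: "\<And>t. t \<in> {0..1} \<Longrightarrow> \<bar>h t\<bar> powr q \<le> pow0 t \<alpha> * P + (1 - pow0 t \<alpha>) * R"
  shows "\<bar>J\<bar> \<le> A1 \<theta> l powr (1 - 1 / q) * (P * A2 \<alpha> \<theta> l + R * A3 \<alpha> \<theta> l) powr (1 / q)"
proof -
  define w where "w t = \<bar>t powr \<theta> - l\<bar>" for t
  define \<phi> where "\<phi> t = pow0 t \<alpha> * P + (1 - pow0 t \<alpha>) * R" for t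
  have \<phi>_bounds: "0 \<le> \<phi> t \<and> \<phi> t \<le> P + R" if "t \<in> {0..1}" for t
    unfolding \<phi>_def using that \<alpha> P R by (rule pow0_convex_comb_bounds)
  have majorant_cont: "continuous_on {0..1} (\<lambda>t. w t * \<phi> t powr (1 / q))"
    unfolding w_def \<phi>_def using \<theta> \<alpha> P R q by (rule continuous_on_abs_powr_minus_mult_root)
  have "\<bar>h t\<bar> \<le> \<phi> t powr (1 / q)" if "t \<in> {0..1}" for t
  proof (cases "h t = 0")
    case False
    then have "\<bar>h t\<bar> = (\<bar>h t\<bar> powr q) powr (1 / q)"
      using q by (simp add: powr_powr)
    also have "\<dots> \<le> \<phi> t powr (1 / q)"
      using bound[OF that] q unfolding \<phi>_def by (intro powr_mono2) auto
    finally show ?thesis .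
  qed simp
  then have "norm ((t powr \<theta> - l) * h t) \<le> w t * \<phi> t powr (1 / q)" if "t \<in> {0..1}" for t
    using that unfolding w_def by (simp add: abs_mult mult_left_mono)
  then have "norm (integral {0..1} (\<lambda>t. (t powr \<theta> - l) * h t)) \<le> integral {0..1} (\<lambda>t. w t * \<phi> t powr (1 / q))"
    using J majorant_cont by (intro integral_norm_bound_integral) (auto intro: integrable_continuous_real)
  also have "\<dots> \<le> A1 \<theta> l powr (1 - 1 / q) * (P * A2 \<alpha> \<theta> l + R * A3 \<alpha> \<theta> l) powr (1 / q)"
  proof (rule integral_weighted_powr_le[OF q _ \<phi>_bounds])
    show "(w has_integral A1 \<theta> l) {0..1}"
      using has_integral_abs_powr_minus_convex_comb[OF \<theta> l \<alpha>, of 1 1] unfolding w_def A3_def by simp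
    show "((\<lambda>t. w t * \<phi> t) has_integral P * A2 \<alpha> \<theta> l + R * A3 \<alpha> \<theta> l) {0..1}"
      using has_integral_abs_powr_minus_convex_comb[OF \<theta> l \<alpha>] unfolding w_def \<phi>_def .
    show "\<And>t. t \<in> {0..1} \<Longrightarrow> 0 \<le> w t"
      by (simp add: w_def)
    show "(\<lambda>t. w t * \<phi> t powr (1 / q)) integrable_on {0..1}"
      using majorant_cont by (rule integrable_continuous_real)
  qed
  finally show ?thesis
    using integral_unique[OF J] by simp
qed

lemma abs_frac_defect_le:
  fixes f f' :: "real \<Rightarrow> real" and \<theta> l q \<alpha> P R u v :: real
  assumes \<theta>: "\<theta> > 0" and l: "0 \<le> l" "l \<le> 1" and q: "q \<ge> 1" and \<alpha>: "0 \<le> \<alpha>"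
    and P: "P \<ge> 0" and R: "R \<ge> 0"
    and deriv: "\<And>y. y \<in> {min u v..max u v} \<Longrightarrow> (f has_real_derivative f' y) (at y)"
    and bound: "\<And>t. t \<in> {0..1} \<Longrightarrow>
      \<bar>f' (u + (v - u) * t)\<bar> powr q \<le> pow0 t \<alpha> * P + (1 - pow0 t \<alpha>) * R"
  shows "\<bar>frac_defect \<theta> l f u v\<bar>
    \<le> \<bar>v - u\<bar> powr (\<theta> + 1) * A1 \<theta> l powr (1 - 1 / q) * (P * A2 \<alpha> \<theta> l + R * A3 \<alpha> \<theta> l) powr (1 / q)"
proof (cases "u = v")
  case False
  have quotient_le: "\<bar>frac_defect \<theta> l f u v / ((v - u) * \<bar>v - u\<bar> powr \<theta>)\<bar>
      \<le> A1 \<theta> l powr (1 - 1 / q) * (P * A2 \<alpha> \<theta> l + R * A3 \<alpha> \<theta> l) powr (1 / q)"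
    using \<theta> l q \<alpha> P R has_integral_frac_defect[OF \<theta> False deriv] bound
    by (rule abs_integral_powr_minus_mult_le)
  have "\<bar>frac_defect \<theta> l f u v\<bar>
      = \<bar>v - u\<bar> powr (\<theta> + 1) * \<bar>frac_defect \<theta> l f u v / ((v - u) * \<bar>v - u\<bar> powr \<theta>)\<bar>"
    using False by (simp add: abs_mult powr_add)
  also have "\<dots> \<le> \<bar>v - u\<bar> powr (\<theta> + 1) *
      (A1 \<theta> l powr (1 - 1 / q) * (P * A2 \<alpha> \<theta> l + R * A3 \<alpha> \<theta> l) powr (1 / q))"
    using quotient_le by (rule mult_left_mono) simp
  finally show ?thesis
    by (simp only: mult.assoc)
qed (simp add: frac_defect_same)

lemma S_f_eq_frac_defect:
  fixes f :: "real \<Rightarrow> real" and m x l \<theta> a b :: real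
  assumes m: "m > 0" and ab: "a < b" and x: "x \<in> {a..b}" and \<theta>: "\<theta> > 0"
  shows "S_f f m x l \<theta> a b
    = (frac_defect \<theta> l f (m * a) (m * x) + frac_defect \<theta> l f (m * b) (m * x)) / (m * (b - a))"
proof -
  have ordered: "m * a \<le> m * x" "m * x \<le> m * b"
    using m x by auto
  have "\<bar>m * x - m * a\<bar> = m * (x - a)" "\<bar>m * x - m * b\<bar> = m * (b - x)"
    using ordered by (auto simp: right_diff_distrib)
  then have scale: "\<bar>m * x - m * a\<bar> powr \<theta> = m * m powr (\<theta> - 1) * (x - a) powr \<theta>"
      "\<bar>m * x - m * b\<bar> powr \<theta> = m * m powr (\<theta> - 1) * (b - x) powr \<theta>"
    using m x by (auto simp: powr_mult powr_diff)
  have "Gamma (\<theta> + 1) = \<theta> * Gamma \<theta>" "Gamma \<theta> > 0"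
    using \<theta> by (auto intro!: Gamma_plus1 dest: nonpos_Ints_nonpos)
  then have defects:
    "frac_defect \<theta> l f (m * a) (m * x) = m * m powr (\<theta> - 1) * (x - a) powr \<theta> * ((1 - l) * f (m * x) + l * f (m * a))
       - Gamma (\<theta> + 1) * RL_left \<theta> f (m * x) (m * a)"
    "frac_defect \<theta> l f (m * b) (m * x) = m * m powr (\<theta> - 1) * (b - x) powr \<theta> * ((1 - l) * f (m * x) + l * f (m * b))
       - Gamma (\<theta> + 1) * RL_right \<theta> f (m * x) (m * b)"
    unfolding frac_defect_def scale RL_left_def RL_right_def using ordered
    by (auto simp: min_def max_def intro!: set_lebesgue_integral_cong)
  have "(1 - l) * M * ((Ya + Yb) / D) * F + l * M * ((Ya * Fa + Yb * Fb) / D) - G / (m * D) * (Ra + Rb)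
      = (m * M * Ya * ((1 - l) * F + l * Fa) - G * Ra + (m * M * Yb * ((1 - l) * F + l * Fb) - G * Rb)) / (m * D)"
    if "m \<noteq> 0" "D \<noteq> 0" for M Ya Yb D F Fa Fb G Ra Rb :: real
    using that by (simp add: field_simps)
  then show ?thesis
    unfolding S_f_def defects using m ab by simp
qed

lemma alpha_m_convex_on_segment_le:
  fixes g :: "real \<Rightarrow> real" and \<alpha> m a b x y t :: real
  assumes conv: "alpha_m_convex_on \<alpha> m {m * a..b} g"
    and m: "0 < m" "m \<le> 1" and a: "0 \<le> a" and x: "x \<in> {a..b}" and y: "y \<in> {a..b}"
    and t: "t \<in> {0..1}"
  shows "g (m * y + (m * x - m * y) * t) \<le> pow0 t \<alpha> * g (m * x) + (1 - pow0 t \<alpha>) * (m * g y)"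
proof -
  have scaled_mem: "m * z \<in> {m * a..b}" and mem: "z \<in> {m * a..b}" if "z \<in> {a..b}" for z
    using that m a mult_left_le_one_le[of z m] mult_left_le_one_le[of a m] by auto
  have "t *\<^sub>R (m * x) + (1 - t) *\<^sub>R (m * y) \<in> {m * a..b}"
    using t scaled_mem[OF x] scaled_mem[OF y] by (intro convexD) auto
  moreover have "t *\<^sub>R (m * x) + (1 - t) *\<^sub>R (m * y) = t * (m * x) + m * (1 - t) * y"
    "m * y + (m * x - m * y) * t = t * (m * x) + m * (1 - t) * y"
    by (simp_all add: algebra_simps)
  ultimately show ?thesis
    using conv[unfolded alpha_m_convex_on_def, rule_format, OF scaled_mem[OF x] mem[OF y] t]
    by (simp add: algebra_simps)
qed

lemma abs_frac_defect_scaled_le: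
  fixes f f' :: "real \<Rightarrow> real" and q \<theta> l \<alpha> m a b x y :: real
  assumes q: "q \<ge> 1" and \<theta>: "\<theta> > 0" and l: "0 \<le> l" "l \<le> 1" and \<alpha>: "0 \<le> \<alpha>"
    and m: "0 < m" "m \<le> 1" and a: "0 \<le> a" and x: "x \<in> {a..b}" and y: "y \<in> {a..b}"
    and deriv: "\<And>z. z \<in> {m * a..b} \<Longrightarrow> (f has_real_derivative f' z) (at z)"
    and conv: "alpha_m_convex_on \<alpha> m {m * a..b} (\<lambda>z. \<bar>f' z\<bar> powr q)"
  shows "\<bar>frac_defect \<theta> l f (m * y) (m * x)\<bar> \<le> m powr (\<theta> + 1) * \<bar>x - y\<bar> powr (\<theta> + 1) *
    A1 \<theta> l powr (1 - 1 / q) *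
    (\<bar>f' (m * x)\<bar> powr q * A2 \<alpha> \<theta> l + m * \<bar>f' y\<bar> powr q * A3 \<alpha> \<theta> l) powr (1 / q)"
proof -
  have "m * z \<in> {m * a..b}" if "z \<in> {a..b}" for z
    using that m a mult_left_le_one_le[of z m] by auto
  then have segment: "{min (m * y) (m * x)..max (m * y) (m * x)} \<subseteq> {m * a..b}"
    using x y by auto
  have "\<bar>frac_defect \<theta> l f (m * y) (m * x)\<bar> \<le> \<bar>m * x - m * y\<bar> powr (\<theta> + 1) *
      A1 \<theta> l powr (1 - 1 / q) *
      (\<bar>f' (m * x)\<bar> powr q * A2 \<alpha> \<theta> l + m * \<bar>f' y\<bar> powr q * A3 \<alpha> \<theta> l) powr (1 / q)"
  proof (rule abs_frac_defect_le[OF \<theta> l q \<alpha>, where f' = f'])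
    show "0 \<le> m * \<bar>f' y\<bar> powr q"
      using m by simp
    show "(f has_real_derivative f' z) (at z)" if "z \<in> {min (m * y) (m * x)..max (m * y) (m * x)}" for z
      using that segment deriv by blast
    show "\<bar>f' (m * y + (m * x - m * y) * t)\<bar> powr q
        \<le> pow0 t \<alpha> * \<bar>f' (m * x)\<bar> powr q + (1 - pow0 t \<alpha>) * (m * \<bar>f' y\<bar> powr q)"
      if "t \<in> {0..1}" for t
      using alpha_m_convex_on_segment_le[OF conv m a x y that] by simp
  qed simp
  moreover have "\<bar>m * x - m * y\<bar> powr (\<theta> + 1) = m powr (\<theta> + 1) * \<bar>x - y\<bar> powr (\<theta> + 1)"
    using m by (simp add: right_diff_distrib[symmetric] abs_mult powr_mult)
  ultimately show ?thesis
    by simp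
qed

theorem theorem2p3:
  fixes f f' :: "real \<Rightarrow> real" and I :: "real set"
    and m \<alpha> a b q x l \<theta> :: real
  assumes q: "q \<ge> 1"
    and I_int: "is_interval I" and I_nonneg: "I \<subseteq> {0..}"
    and deriv: "\<And>y. y \<in> interior I \<Longrightarrow> (f has_real_derivative f' y) (at y)"
    and m: "0 < m" "m \<le> 1"
    and \<alpha>: "0 \<le> \<alpha>" "\<alpha> \<le> 1"
    and ab: "a < b" "m * a \<in> interior I" "b \<in> interior I"
    and f'_int: "set_integrable lborel {m * a..m * b} f'"
    and conv: "alpha_m_convex_on \<alpha> m {m * a..b} (\<lambda>y. \<bar>f' y\<bar> powr q)"
    and x: "x \<in> {a..b}" and l: "l \<in> {0..1}" and \<theta>: "\<theta> > 0"
  shows "\<bar>S_f f m x l \<theta> a b\<bar> \<le>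
    m powr \<theta> * A1 \<theta> l powr (1 - 1 / q) / (b - a) *
      ((x - a) powr (\<theta> + 1) *
         (\<bar>f' (m * x)\<bar> powr q * A2 \<alpha> \<theta> l + m * \<bar>f' a\<bar> powr q * A3 \<alpha> \<theta> l) powr (1 / q)
     + (b - x) powr (\<theta> + 1) *
         (\<bar>f' (m * x)\<bar> powr q * A2 \<alpha> \<theta> l + m * \<bar>f' b\<bar> powr q * A3 \<alpha> \<theta> l) powr (1 / q))"
proof -
  have "0 \<le> m * a"
    using ab(2) interior_subset I_nonneg by fastforce
  then have a: "0 \<le> a"
    using m(1) by (simp add: zero_le_mult_iff)
  have deriv': "(f has_real_derivative f' z) (at z)" if "z \<in> {m * a..b}" for z
    using that deriv atLeastAtMost_subset_interior[OF I_int ab(2,3)] by blast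
  have l': "0 \<le> l" "l \<le> 1"
    using l by auto
  note side = abs_frac_defect_scaled_le[OF q \<theta> l' \<alpha>(1) m a x _ deriv' conv]
  have "\<bar>S_f f m x l \<theta> a b\<bar>
      \<le> (\<bar>frac_defect \<theta> l f (m * a) (m * x)\<bar> + \<bar>frac_defect \<theta> l f (m * b) (m * x)\<bar>) / (m * (b - a))"
    unfolding S_f_eq_frac_defect[OF m(1) ab(1) x \<theta>] using m ab
    by (simp add: abs_triangle_ineq divide_right_mono)
  also have "\<dots> \<le> (m powr (\<theta> + 1) * \<bar>x - a\<bar> powr (\<theta> + 1) * A1 \<theta> l powr (1 - 1 / q) *
        (\<bar>f' (m * x)\<bar> powr q * A2 \<alpha> \<theta> l + m * \<bar>f' a\<bar> powr q * A3 \<alpha> \<theta> l) powr (1 / q)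
      + m powr (\<theta> + 1) * \<bar>x - b\<bar> powr (\<theta> + 1) * A1 \<theta> l powr (1 - 1 / q) *
        (\<bar>f' (m * x)\<bar> powr q * A2 \<alpha> \<theta> l + m * \<bar>f' b\<bar> powr q * A3 \<alpha> \<theta> l) powr (1 / q)) / (m * (b - a))"
    using side[of a] side[of b] ab(1) m by (intro divide_right_mono add_mono) auto
  also have "\<dots> = m powr \<theta> * A1 \<theta> l powr (1 - 1 / q) / (b - a) *
      ((x - a) powr (\<theta> + 1) *
         (\<bar>f' (m * x)\<bar> powr q * A2 \<alpha> \<theta> l + m * \<bar>f' a\<bar> powr q * A3 \<alpha> \<theta> l) powr (1 / q)
     + (b - x) powr (\<theta> + 1) *
         (\<bar>f' (m * x)\<bar> powr q * A2 \<alpha> \<theta> l + m * \<bar>f' b\<bar> powr q * A3 \<alpha> \<theta> l) powr (1 / q))"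
    using x m ab(1) by (simp add: powr_add field_simps)
  finally show ?thesis .
qed

end
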